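(* For every $k\ge1$ there is a constant $C_k>0$ such that the following holds. Let $\tau\in\mathcal S_k$, $n\ge k$, let $\pi$ be a uniformly random permutation in $\mathcal S_n$, and let $X_{\tau,n}$ be the number of occurrences of $\tau$ in $\pi$. Then for every $t\ge\binom{n-1}{k-1}$, \[\Pr\big(|X_{\tau,n}-E[X_{\tau,n}]|>t\big)\le2\exp\Big(-\frac{t^2}{C_kn^{2k-1}}\Big).\]
   Context: $\mathcal S_n$ is the set of linear permutations $\pi=[\pi_1\ldots\pi_n]$ of $[n]$. An occurrence of a pattern $\tau\in\mathcal S_k$ in $\pi$ is a choice of indices $1\le i_1<\dots<i_k\le n$ such that for all $s,t$, $\pi_{i_s}<\pi_{i_t}$ if and only if $\tau_s<\tau_t$. *)

theory Defs
  imports "HOL-Analysis.Analysis" "HOL-Combinatorics.Permutations"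
begin

definition perms :: "nat \<Rightarrow> (nat \<Rightarrow> nat) set" where
  "perms n = {p. p permutes {1..n}}"

definition occurrences :: "nat \<Rightarrow> (nat \<Rightarrow> nat) \<Rightarrow> nat \<Rightarrow> (nat \<Rightarrow> nat) \<Rightarrow> nat list set" where
  "occurrences k tau n p =
     {is. length is = k \<and> sorted_wrt (<) is \<and> set is \<subseteq> {1..n} \<and>
          (\<forall>s\<in>{1..k}. \<forall>t\<in>{1..k}. p (is ! (s - 1)) < p (is ! (t - 1)) \<longleftrightarrow> tau s < tau t)}"

definition occ_count :: "nat \<Rightarrow> (nat \<Rightarrow> nat) \<Rightarrow> nat \<Rightarrow> (nat \<Rightarrow> nat) \<Rightarrow> real" where
  "occ_count k tau n p = real (card (occurrences k tau n p))"

definition occ_mean :: "nat \<Rightarrow> (nat \<Rightarrow> nat) \<Rightarrow> nat \<Rightarrow> real" where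
  "occ_mean k tau n = (\<Sum>p\<in>perms n. occ_count k tau n p) / real (card (perms n))"

definition dev_prob :: "nat \<Rightarrow> (nat \<Rightarrow> nat) \<Rightarrow> nat \<Rightarrow> real \<Rightarrow> real" where
  "dev_prob k tau n t =
     real (card {p\<in>perms n. \<bar>occ_count k tau n p - occ_mean k tau n\<bar> > t})
       / real (card (perms n))"

end

theory Submission
  imports Defs "HOL-Probability.Probability"
begin

text \<open>
  Write a uniformly random permutation of a finite set A as a list and reveal its entries one
  at a time. If a statistic f changes by at most c when two values are swapped, then the
  conditional means of f given the first entry a differ by at most c between any two choices
  of a (swapping a with the other value couples the two conditional distributions). Hoeffding's
  lemma bounds the exponential moment of this first increment, and induction on |A| gives
  E exp(l (f - E f)) <= exp(|A| l^2 c^2 / 8), hence the tail bound 2 exp(-2 t^2 / (|A| c^2)).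

  A transposition of two values of a permutation of {1..n} only affects occurrences through
  the two positions holding them, and at most binom(n-1, k-1) index sets of size k pass
  through a given position; so c = 2 binom(n-1, k-1) works, and n binom(n-1, k-1)^2 <= n^(2k-1)
  gives the theorem with C = 2.
\<close>

section \<open>Averages over finite sets\<close>

definition average :: "'a set \<Rightarrow> ('a \<Rightarrow> real) \<Rightarrow> real" where
  "average S f = (\<Sum>x\<in>S. f x) / card S"

lemma average_cmult: "average S (\<lambda>x. c * f x) = c * average S f"
  by (simp add: average_def sum_distrib_left)

lemma average_cong: "(\<And>x. x \<in> S \<Longrightarrow> f x = g x) \<Longrightarrow> average S f = average S g"
  by (simp add: average_def)

lemma average_mono: "(\<And>x. x \<in> S \<Longrightarrow> f x \<le> g x) \<Longrightarrow> average S f \<le> average S g"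
  unfolding average_def by (intro divide_right_mono sum_mono) auto

lemma average_const: "finite S \<Longrightarrow> S \<noteq> {} \<Longrightarrow> average S (\<lambda>_. c) = c"
  by (simp add: average_def)

lemma average_add_const: "finite S \<Longrightarrow> S \<noteq> {} \<Longrightarrow> average S (\<lambda>x. f x + c) = average S f + c"
  by (simp add: average_def sum.distrib add_divide_distrib)

lemma average_reindex_bij_betw:
  "bij_betw h S T \<Longrightarrow> average S (\<lambda>x. f (h x)) = average T f"
  by (simp add: average_def sum.reindex_bij_betw bij_betw_same_card)

lemma Hoeffdings_lemma_average:
  fixes g :: "'a \<Rightarrow> real"
  assumes "finite S" "S \<noteq> {}" "l \<ge> 0" and range: "\<And>x. x \<in> S \<Longrightarrow> g x \<in> {a..b}"
  shows "average S (\<lambda>x. exp (l * (g x - average S g))) \<le> exp (l\<^sup>2 * (b - a)\<^sup>2 / 8)"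
proof (cases "l = 0")
  case True
  then show ?thesis using assms by (simp add: average_const)
next
  case False
  with \<open>l \<ge> 0\<close> have "l > 0" by simp
  let ?M = "measure_pmf (pmf_of_set S)"
  interpret interval_bounded_random_variable ?M g a b
  proof
    show "AE x in ?M. g x \<in> {a..b}"
      using assms range by (auto simp: AE_measure_pmf_iff)
  qed simp
  have mean: "measure_pmf.expectation (pmf_of_set S) g = average S g"
    using assms by (simp add: integral_pmf_of_set average_def)
  have "ennreal (average S (\<lambda>x. exp (l * (g x - average S g))))
          = (\<integral>\<^sup>+x. exp (l * (g x - measure_pmf.expectation (pmf_of_set S) g)) \<partial>?M)"
    using assms unfolding mean
    by (simp add: nn_integral_pmf_of_set average_def sum_nonneg divide_ennreal card_gt_0_iff
        ennreal_of_nat_eq_real_of_nat)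
  also have "\<dots> \<le> ennreal (exp (l\<^sup>2 * (b - a)\<^sup>2 / 8))"
    by (rule Hoeffdings_lemma_nn_integral[OF \<open>l > 0\<close>])
  finally show ?thesis by (simp add: ennreal_le_iff)
qed

lemma average_permutations_of_set_Cons:
  assumes "finite A" "A \<noteq> {}"
  shows "average (permutations_of_set A) f
           = average A (\<lambda>a. average (permutations_of_set (A - {a})) (\<lambda>ys. f (a # ys)))"
proof -
  obtain m where m: "card A = Suc m" using assms by (cases "card A") auto
  have "(\<Sum>xs\<in>permutations_of_set A. f xs)
          = (\<Sum>a\<in>A. \<Sum>xs\<in>(#) a ` permutations_of_set (A - {a}). f xs)"
    using assms by (subst permutations_of_set_nonempty) (auto intro!: sum.UNION_disjoint)
  also have "\<dots> = (\<Sum>a\<in>A. \<Sum>ys\<in>permutations_of_set (A - {a}). f (a # ys))"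
    by (rule sum.cong[OF refl], subst sum.reindex) auto
  finally show ?thesis
    using assms m by (simp add: average_def sum_divide_distrib[symmetric] field_simps)
qed

section \<open>Concentration for uniformly random permutations\<close>

definition transposition_bounded :: "'a set \<Rightarrow> real \<Rightarrow> ('a list \<Rightarrow> real) \<Rightarrow> bool" where
  "transposition_bounded A c f \<longleftrightarrow>
     (\<forall>xs\<in>permutations_of_set A. \<forall>a\<in>A. \<forall>b\<in>A.
        \<bar>f (map (Transposition.transpose a b) xs) - f xs\<bar> \<le> c)"

lemma transposition_bounded_Cons:
  assumes "transposition_bounded A c f" "a \<in> A"
  shows "transposition_bounded (A - {a}) c (\<lambda>ys. f (a # ys))"
  unfolding transposition_bounded_def
proof (intro ballI)
  fix xs a' b' assume xs: "xs \<in> permutations_of_set (A - {a})" and "a' \<in> A - {a}" "b' \<in> A - {a}"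
  moreover from xs have "a # xs \<in> permutations_of_set A"
    using \<open>a \<in> A\<close> by (auto simp: permutations_of_set_def)
  moreover have "Transposition.transpose a' b' a = a"
    using calculation(2,3) by auto
  ultimately show "\<bar>f (a # map (Transposition.transpose a' b') xs) - f (a # xs)\<bar> \<le> c"
    using assms(1) unfolding transposition_bounded_def
    by (metis (no_types, lifting) Diff_iff list.simps(9))
qed

lemma bij_betw_map_transpose_permutations_of_set:
  assumes "a \<in> A" "b \<in> A"
  shows "bij_betw (map (Transposition.transpose a b))
           (permutations_of_set (A - {a})) (permutations_of_set (A - {b}))"
proof -
  have "Transposition.transpose a b ` (A - {a}) = A - {b}"
    using assms by (simp add: image_set_diff[OF inj_transpose])
  then show ?thesis
    by (metis permutations_of_set_image_inj inj_on_subset[OF inj_transpose] subset_UNIV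
        inj_on_mapI inj_on_imp_bij_betw)
qed

lemma average_Cons_transpose_le:
  assumes "finite A" "transposition_bounded A c f" "a \<in> A" "b \<in> A"
  shows "average (permutations_of_set (A - {b})) (\<lambda>ys. f (b # ys))
           \<le> average (permutations_of_set (A - {a})) (\<lambda>ys. f (a # ys)) + c"
proof -
  let ?s = "Transposition.transpose a b"
  have "average (permutations_of_set (A - {b})) (\<lambda>ys. f (b # ys))
          = average (permutations_of_set (A - {a})) (\<lambda>ys. f (map ?s (a # ys)))"
    by (simp add: average_reindex_bij_betw[OF bij_betw_map_transpose_permutations_of_set[OF assms(3,4)],
          symmetric])
  also have "\<dots> \<le> average (permutations_of_set (A - {a})) (\<lambda>ys. f (a # ys) + c)"
  proof (rule average_mono)
    fix ys assume "ys \<in> permutations_of_set (A - {a})"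
    then have "a # ys \<in> permutations_of_set A"
      using assms(3) by (auto simp: permutations_of_set_def)
    then show "f (map ?s (a # ys)) \<le> f (a # ys) + c"
      using assms(2-4) unfolding transposition_bounded_def by fastforce
  qed
  also have "\<dots> = average (permutations_of_set (A - {a})) (\<lambda>ys. f (a # ys)) + c"
    using assms(1) by (simp add: average_add_const)
  finally show ?thesis .
qed

lemma average_exp_permutations_of_set_le:
  fixes c l :: real
  assumes "finite A" "transposition_bounded A c f" "l \<ge> 0"
  shows "average (permutations_of_set A) (\<lambda>xs. exp (l * (f xs - average (permutations_of_set A) f)))
           \<le> exp (card A * l\<^sup>2 * c\<^sup>2 / 8)"
  using assms(1,2)
proof (induction "card A" arbitrary: A f)
  case 0
  then show ?case by (simp add: average_def)
next
  case (Suc m A f)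
  then have "A \<noteq> {}" by auto
  define g where "g a = average (permutations_of_set (A - {a})) (\<lambda>ys. f (a # ys))" for a
  define \<mu> where "\<mu> = average (permutations_of_set A) f"
  define E where "E = exp (m * l\<^sup>2 * c\<^sup>2 / 8)"
  have \<mu>: "\<mu> = average A g"
    unfolding \<mu>_def g_def by (rule average_permutations_of_set_Cons[OF Suc.prems(1) \<open>A \<noteq> {}\<close>])
  have IH: "average (permutations_of_set (A - {a})) (\<lambda>ys. exp (l * (f (a # ys) - g a))) \<le> E"
    if "a \<in> A" for a
  proof -
    have "m = card (A - {a})"
      using Suc.hyps(2) Suc.prems(1) that by simp
    from Suc.hyps(1)[OF this _ transposition_bounded_Cons[OF Suc.prems(2) that]] Suc.prems(1)
    show ?thesis by (simp add: g_def E_def \<open>m = card (A - {a})\<close>)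
  qed
  have range: "g a \<in> {Min (g ` A) .. Min (g ` A) + c}" if "a \<in> A" for a
  proof -
    have "Min (g ` A) \<in> g ` A"
      using Suc.prems(1) \<open>A \<noteq> {}\<close> by (intro Min_in) auto
    then obtain b where "b \<in> A" "Min (g ` A) = g b" by auto
    moreover have "g a \<le> g b + c"
      unfolding g_def by (rule average_Cons_transpose_le[OF Suc.prems \<open>b \<in> A\<close> that])
    moreover have "Min (g ` A) \<le> g a"
      using Suc.prems(1) that by simp
    ultimately show ?thesis by simp
  qed
  have "average (permutations_of_set A) (\<lambda>xs. exp (l * (f xs - \<mu>)))
          = average A (\<lambda>a. exp (l * (g a - \<mu>))
              * average (permutations_of_set (A - {a})) (\<lambda>ys. exp (l * (f (a # ys) - g a))))"
    by (simp add: average_permutations_of_set_Cons[OF Suc.prems(1) \<open>A \<noteq> {}\<close>]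
        average_cmult[symmetric] mult_exp_exp algebra_simps)
  also have "\<dots> \<le> average A (\<lambda>a. E * exp (l * (g a - \<mu>)))"
    by (intro average_mono) (simp add: IH mult.commute)
  also have "\<dots> \<le> E * exp (l\<^sup>2 * c\<^sup>2 / 8)"
    using Hoeffdings_lemma_average[OF Suc.prems(1) \<open>A \<noteq> {}\<close> \<open>l \<ge> 0\<close> range]
    by (simp add: average_cmult \<mu> E_def)
  also have "\<dots> = exp (card A * l\<^sup>2 * c\<^sup>2 / 8)"
    by (simp add: E_def mult_exp_exp Suc.hyps(2)[symmetric] algebra_simps add_divide_distrib)
  finally show ?case by (simp add: \<mu>_def)
qed

lemma card_greater_le_average_exp:
  fixes h :: "'a \<Rightarrow> real"
  assumes "finite S" "l \<ge> 0"
  shows "card {x\<in>S. t < h x} / card S \<le> exp (- (l * t)) * average S (\<lambda>x. exp (l * h x))"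
proof -
  have "card {x\<in>S. t < h x} * exp (l * t) = (\<Sum>x\<in>{x\<in>S. t < h x}. exp (l * t))"
    by simp
  also have "\<dots> \<le> (\<Sum>x\<in>{x\<in>S. t < h x}. exp (l * h x))"
    using assms(2) by (intro sum_mono) (auto intro: mult_left_mono)
  also have "\<dots> \<le> (\<Sum>x\<in>S. exp (l * h x))"
    using assms(1) by (intro sum_mono2) auto
  finally have "card {x\<in>S. t < h x} \<le> (\<Sum>x\<in>S. exp (l * h x)) / exp (l * t)"
    by (simp add: pos_le_divide_eq)
  then have "card {x\<in>S. t < h x} \<le> exp (- (l * t)) * (\<Sum>x\<in>S. exp (l * h x))"
    by (simp add: exp_minus divide_inverse_commute)
  then show ?thesis
    unfolding average_def by (simp add: divide_right_mono)
qed

lemma permutations_of_set_upper_tail: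
  fixes c t :: real
  assumes "finite A" "A \<noteq> {}" "transposition_bounded A c f" "c > 0" "t \<ge> 0"
  shows "card {xs\<in>permutations_of_set A. t < f xs - average (permutations_of_set A) f}
           / card (permutations_of_set A) \<le> exp (- 2 * t\<^sup>2 / (card A * c\<^sup>2))"
proof -
  define m where "m = real (card A)"
  have "m > 0" using assms(1,2) by (simp add: m_def card_gt_0_iff)
  define l where "l = 4 * t / (m * c\<^sup>2)" \<comment> \<open>minimises the Chernoff exponent\<close>
  have "l \<ge> 0" using \<open>m > 0\<close> assms(5) by (simp add: l_def)
  let ?P = "permutations_of_set A"
  have "card {xs\<in>?P. t < f xs - average ?P f} / card ?P
          \<le> exp (- (l * t)) * average ?P (\<lambda>xs. exp (l * (f xs - average ?P f)))"
    by (rule card_greater_le_average_exp[OF finite_permutations_of_set \<open>l \<ge> 0\<close>])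
  also have "\<dots> \<le> exp (- (l * t)) * exp (m * l\<^sup>2 * c\<^sup>2 / 8)"
    unfolding m_def
    by (intro mult_left_mono average_exp_permutations_of_set_le assms(1,3) \<open>l \<ge> 0\<close>) simp
  also have "\<dots> = exp (- (l * t) + m * l\<^sup>2 * c\<^sup>2 / 8)"
    by (simp add: mult_exp_exp)
  also have "- (l * t) + m * l\<^sup>2 * c\<^sup>2 / 8 = - 2 * t\<^sup>2 / (m * c\<^sup>2)"
    using \<open>m > 0\<close> assms(4) by (simp add: l_def field_simps power2_eq_square)
  finally show ?thesis by (simp add: m_def)
qed

lemma permutations_of_set_tail:
  fixes c t :: real
  assumes "finite A" "A \<noteq> {}" "transposition_bounded A c f" "c > 0" "t \<ge> 0"
  shows "card {xs\<in>permutations_of_set A. t < \<bar>f xs - average (permutations_of_set A) f\<bar>}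
           / card (permutations_of_set A) \<le> 2 * exp (- 2 * t\<^sup>2 / (card A * c\<^sup>2))"
proof -
  let ?P = "permutations_of_set A"
  let ?upper = "{xs\<in>?P. t < f xs - average ?P f}"
  let ?lower = "{xs\<in>?P. t < (- f xs) - average ?P (\<lambda>xs. - f xs)}"
  have "transposition_bounded A c (\<lambda>xs. - f xs)"
    using assms(3) by (simp add: transposition_bounded_def abs_minus_commute)
  note lower = permutations_of_set_upper_tail[OF assms(1,2) this assms(4,5)]
  have "average ?P (\<lambda>xs. - f xs) = - average ?P f"
    using average_cmult[of ?P "-1" f] by simp
  then have "{xs\<in>?P. t < \<bar>f xs - average ?P f\<bar>} \<subseteq> ?upper \<union> ?lower"
    by auto
  then have "card {xs\<in>?P. t < \<bar>f xs - average ?P f\<bar>} \<le> card (?upper \<union> ?lower)"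
    by (intro card_mono) auto
  also have "\<dots> \<le> card ?upper + card ?lower"
    by (rule card_Un_le)
  finally have "card {xs\<in>?P. t < \<bar>f xs - average ?P f\<bar>} \<le> card ?upper + card ?lower" .
  then have "card {xs\<in>?P. t < \<bar>f xs - average ?P f\<bar>} / card ?P
               \<le> card ?upper / card ?P + card ?lower / card ?P"
    unfolding add_divide_distrib[symmetric] by (intro divide_right_mono) simp_all
  with permutations_of_set_upper_tail[OF assms] lower show ?thesis by linarith
qed

lemma bij_betw_map_permutes:
  assumes xs: "xs \<in> permutations_of_set A"
  shows "bij_betw (\<lambda>p. map p xs) {p. p permutes A} (permutations_of_set A)"
proof -
  have A: "set xs = A" "distinct xs" "finite A"
    using xs by (auto simp: permutations_of_set_def)
  have inj: "inj_on (\<lambda>p. map p xs) {p. p permutes A}"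
  proof (rule inj_onI)
    fix p q assume "p \<in> {p. p permutes A}" "q \<in> {p. p permutes A}" "map p xs = map q xs"
    then show "p = q"
      using A(1) by (intro ext) (metis map_eq_conv mem_Collect_eq permutes_not_in)
  qed
  have into: "(\<lambda>p. map p xs) ` {p. p permutes A} \<subseteq> permutations_of_set A"
    using A by (auto simp: permutations_of_set_def permutes_image distinct_map permutes_inj_on)
  have "card ((\<lambda>p. map p xs) ` {p. p permutes A}) = card (permutations_of_set A)"
    using A(3) by (simp add: card_image[OF inj] card_permutations)
  with into have "(\<lambda>p. map p xs) ` {p. p permutes A} = permutations_of_set A"
    by (intro card_subset_eq) simp_all
  with inj show ?thesis by (simp add: bij_betw_def)
qed

lemma card_Collect_bij_betw:
  assumes "bij_betw h S T"
  shows "card {x\<in>S. P (h x)} = card {y\<in>T. P y}"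
proof -
  have "{y\<in>T. P y} = h ` {x\<in>S. P (h x)}"
    using assms by (auto simp: bij_betw_def)
  moreover have "inj_on h {x\<in>S. P (h x)}"
    using assms by (auto simp: bij_betw_def intro: inj_on_subset)
  ultimately show ?thesis by (simp add: card_image)
qed

theorem permutes_deviation_le:
  fixes F :: "('a \<Rightarrow> 'a) \<Rightarrow> real" and c t :: real
  assumes "finite A" "A \<noteq> {}" "c > 0" "t \<ge> 0"
    and bounded: "\<And>p a b. p permutes A \<Longrightarrow> a \<in> A \<Longrightarrow> b \<in> A \<Longrightarrow>
                    \<bar>F (Transposition.transpose a b \<circ> p) - F p\<bar> \<le> c"
  shows "card {p. p permutes A \<and> t < \<bar>F p - average {p. p permutes A} F\<bar>}
           / card {p. p permutes A} \<le> 2 * exp (- 2 * t\<^sup>2 / (card A * c\<^sup>2))"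
proof -
  obtain xs where xs: "xs \<in> permutations_of_set A"
    using assms(1) finite_distinct_list by (auto simp: permutations_of_set_def)
  let ?S = "{p. p permutes A}" and ?P = "permutations_of_set A"
  let ?enum = "\<lambda>p. map p xs"
  define f where "f = F \<circ> inv_into ?S ?enum"
  have bij: "bij_betw ?enum ?S ?P" by (rule bij_betw_map_permutes[OF xs])
  have f_enum: "f (?enum p) = F p" if "p permutes A" for p
    using bij_betw_inv_into_left[OF bij] that by (simp add: f_def)
  have "transposition_bounded A c f"
    unfolding transposition_bounded_def
  proof (intro ballI)
    fix ys a b assume "ys \<in> ?P" "a \<in> A" "b \<in> A"
    then obtain p where p: "p permutes A" "ys = ?enum p"
      using bij by (auto simp: bij_betw_def)
    have "Transposition.transpose a b \<circ> p permutes A"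
      using p(1) \<open>a \<in> A\<close> \<open>b \<in> A\<close> by (simp add: permutes_compose permutes_swap_id)
    then have "f (map (Transposition.transpose a b) ys) = F (Transposition.transpose a b \<circ> p)"
      using f_enum p(2) by (metis map_map)
    then show "\<bar>f (map (Transposition.transpose a b) ys) - f ys\<bar> \<le> c"
      using bounded[OF p(1) \<open>a \<in> A\<close> \<open>b \<in> A\<close>] p f_enum by simp
  qed
  moreover have "average ?S F = average ?P f"
    using average_reindex_bij_betw[OF bij, of f] average_cong[of ?S F "\<lambda>p. f (?enum p)"]
    by (simp add: f_enum)
  moreover have "{p\<in>?S. t < \<bar>F p - average ?P f\<bar>} = {p\<in>?S. t < \<bar>f (?enum p) - average ?P f\<bar>}"
    by (auto simp: f_enum)
  then have "card {p\<in>?S. t < \<bar>F p - average ?P f\<bar>} = card {ys\<in>?P. t < \<bar>f ys - average ?P f\<bar>}"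
    using card_Collect_bij_betw[OF bij, of "\<lambda>ys. t < \<bar>f ys - average ?P f\<bar>"] by simp
  moreover have "card ?S = card ?P" by (rule bij_betw_same_card[OF bij])
  ultimately show ?thesis
    using permutations_of_set_tail[OF assms(1,2) _ assms(3,4)] by simp
qed

section \<open>Occurrences of a pattern\<close>

lemma abs_card_diff_le_card:
  assumes "finite X" "finite Y" "finite D" "X - D = Y - D"
  shows "\<bar>real (card X) - real (card Y)\<bar> \<le> card D"
proof -
  have split: "real (card Z) = real (card (Z \<inter> D)) + real (card (Z - D))" if "finite Z" for Z :: "'a set"
  proof -
    have "card Z = card ((Z \<inter> D) \<union> (Z - D))" by (simp add: Int_Diff_Un)
    also have "\<dots> = card (Z \<inter> D) + card (Z - D)"
      using that by (intro card_Un_disjoint) auto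
    finally show ?thesis by simp
  qed
  have "card (X \<inter> D) \<le> card D" "card (Y \<inter> D) \<le> card D"
    using assms(3) by (auto intro: card_mono)
  then have "real (card (X \<inter> D)) \<le> card D" "real (card (Y \<inter> D)) \<le> card D"
    by simp_all
  moreover have "card (X - D) = card (Y - D)"
    using assms(4) by simp
  ultimately show ?thesis
    using split[OF assms(1)] split[OF assms(2)] by linarith
qed

definition index_lists_through :: "nat \<Rightarrow> nat \<Rightarrow> nat \<Rightarrow> nat list set" where
  "index_lists_through n k i =
     {ws. length ws = k \<and> sorted_wrt (<) ws \<and> set ws \<subseteq> {1..n} \<and> i \<in> set ws}"

lemma finite_index_lists_through: "finite (index_lists_through n k i)"
  unfolding index_lists_through_def
  by (rule finite_subset[OF _ finite_lists_length_eq[of "{1..n}" k]]) auto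

lemma card_index_lists_through_le:
  assumes "i \<in> {1..n}"
  shows "card (index_lists_through n k i) \<le> (n - 1) choose (k - 1)"
proof -
  let ?T = "{B. B \<subseteq> {1..n} - {i} \<and> card B = k - 1}"
  have inj: "inj_on set (index_lists_through n k i)"
    by (intro inj_onI) (auto simp: index_lists_through_def intro: strict_sorted_equal)
  have "set ` index_lists_through n k i \<subseteq> insert i ` ?T"
  proof
    fix S assume "S \<in> set ` index_lists_through n k i"
    then obtain ws where ws: "ws \<in> index_lists_through n k i" "S = set ws" by auto
    then have "card S = k" "i \<in> S" "S \<subseteq> {1..n}"
      by (auto simp: index_lists_through_def strict_sorted_iff distinct_card)
    moreover from this have "finite S" by (auto intro: finite_subset)
    ultimately have "S - {i} \<in> ?T" "S = insert i (S - {i})" by auto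
    then show "S \<in> insert i ` ?T" by blast
  qed
  moreover have "finite ?T"
    by (rule finite_subset[of _ "Pow {1..n}"]) auto
  ultimately have "card (set ` index_lists_through n k i) \<le> card (insert i ` ?T)"
    by (intro card_mono) simp_all
  also have "\<dots> \<le> card ?T"
    using \<open>finite ?T\<close> by (rule card_image_le)
  finally have "card (index_lists_through n k i) \<le> card ?T"
    by (simp add: card_image[OF inj])
  also have "\<dots> = (n - 1) choose (k - 1)"
    using assms by (simp add: n_subsets)
  finally show ?thesis .
qed

lemma finite_occurrences: "finite (occurrences k tau n p)"
  unfolding occurrences_def
  by (rule finite_subset[OF _ finite_lists_length_eq[of "{1..n}" k]]) auto

lemma occurrences_cong:
  assumes "\<And>i. i \<in> set ws \<Longrightarrow> p i = q i"
  shows "ws \<in> occurrences k tau n p \<longleftrightarrow> ws \<in> occurrences k tau n q"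
proof -
  have "p (ws ! (s - 1)) = q (ws ! (s - 1))" if "length ws = k" "s \<in> {1..k}" for s
    using assms that by (intro assms nth_mem) auto
  then show ?thesis
    unfolding occurrences_def by auto
qed

lemma occ_count_transpose_diff_le:
  assumes p: "p permutes {1..n}" and "a \<in> {1..n}" "b \<in> {1..n}"
  shows "\<bar>occ_count k tau n (Transposition.transpose a b \<circ> p) - occ_count k tau n p\<bar>
           \<le> 2 * real ((n - 1) choose (k - 1))"
proof -
  define D where "D = index_lists_through n k (inv p a) \<union> index_lists_through n k (inv p b)"
  have inv: "inv p a \<in> {1..n}" "inv p b \<in> {1..n}" "p (inv p a) = a" "p (inv p b) = b"
    using assms by (simp_all only: permutes_in_image[OF permutes_inv[OF p]] permutes_inverses(1)[OF p])
  have "ws \<in> occurrences k tau n (Transposition.transpose a b \<circ> p) \<longleftrightarrow> ws \<in> occurrences k tau n p"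
    if "ws \<notin> D" for ws
  proof (cases "length ws = k \<and> sorted_wrt (<) ws \<and> set ws \<subseteq> {1..n}")
    case True
    with that have "inv p a \<notin> set ws" "inv p b \<notin> set ws"
      by (auto simp: D_def index_lists_through_def)
    then have "p i \<noteq> p (inv p a)" "p i \<noteq> p (inv p b)" if "i \<in> set ws" for i
      using that by (auto simp: inj_eq[OF permutes_inj[OF p]])
    then have "p i \<noteq> a" "p i \<noteq> b" if "i \<in> set ws" for i
      using that inv by simp_all
    then show ?thesis by (intro occurrences_cong) simp
  next
    case False
    then show ?thesis by (auto simp: occurrences_def)
  qed
  then have "occurrences k tau n (Transposition.transpose a b \<circ> p) - D = occurrences k tau n p - D"
    by blast
  then have "\<bar>occ_count k tau n (Transposition.transpose a b \<circ> p) - occ_count k tau n p\<bar> \<le> card D"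
    unfolding occ_count_def D_def
    by (intro abs_card_diff_le_card finite_occurrences finite_UnI finite_index_lists_through)
  also have "card D \<le> 2 * ((n - 1) choose (k - 1))"
    using card_Un_le[of "index_lists_through n k (inv p a)" "index_lists_through n k (inv p b)"]
      card_index_lists_through_le[OF inv(1), of k] card_index_lists_through_le[OF inv(2), of k]
    unfolding D_def by linarith
  finally show ?thesis by simp
qed

lemma mult_choose_square_le_power:
  assumes "1 \<le> k" "k \<le> n"
  shows "n * ((n - 1) choose (k - 1))\<^sup>2 \<le> n ^ (2 * k - 1)"
proof -
  have "(n - 1) choose (k - 1) \<le> (n - 1) ^ (k - 1)"
    using assms by (intro binomial_le_pow) simp
  also have "\<dots> \<le> n ^ (k - 1)"
    by (intro power_mono) simp_all
  finally have "n * ((n - 1) choose (k - 1))\<^sup>2 \<le> n * (n ^ (k - 1))\<^sup>2"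
    by (intro mult_left_mono power_mono) simp_all
  also have "\<dots> = n ^ Suc (2 * (k - 1))"
    by (simp add: power_mult[symmetric] mult.commute)
  also have "Suc (2 * (k - 1)) = 2 * k - 1"
    using assms(1) by simp
  finally show ?thesis .
qed

lemma dev_prob_le:
  assumes "1 \<le> k" "k \<le> n" and t: "t \<ge> real ((n - 1) choose (k - 1))"
  shows "dev_prob k tau n t \<le> 2 * exp (- (t ^ 2) / (2 * real n ^ (2 * k - 1)))"
proof -
  define B where "B = real ((n - 1) choose (k - 1))"
  have "B \<ge> 1"
    using assms(2) by (simp add: B_def Suc_le_eq)
  have "n > 0" using assms(1,2) by simp
  have "dev_prob k tau n t
          = card {p. p permutes {1..n} \<and>
                     t < \<bar>occ_count k tau n p - average {p. p permutes {1..n}} (occ_count k tau n)\<bar>}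
            / card {p. p permutes {1..n}}"
    by (simp add: dev_prob_def occ_mean_def average_def perms_def)
  also have "\<dots> \<le> 2 * exp (- 2 * t\<^sup>2 / (card {1..n} * (2 * B)\<^sup>2))"
  proof (rule permutes_deviation_le)
    show "\<bar>occ_count k tau n (Transposition.transpose a b \<circ> p) - occ_count k tau n p\<bar> \<le> 2 * B"
      if "p permutes {1..n}" "a \<in> {1..n}" "b \<in> {1..n}" for p a b
      unfolding B_def using that by (rule occ_count_transpose_diff_le)
    show "{1..n} \<noteq> {}" "2 * B > 0" "t \<ge> 0"
      using \<open>B \<ge> 1\<close> t \<open>n > 0\<close> by simp_all
  qed simp
  also have "\<dots> = 2 * exp (- (t\<^sup>2 / (2 * (real n * B\<^sup>2))))"
    by (simp add: power_mult_distrib)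
  also have "\<dots> \<le> 2 * exp (- (t ^ 2) / (2 * real n ^ (2 * k - 1)))"
  proof -
    have "real n * B\<^sup>2 \<le> real n ^ (2 * k - 1)"
      using mult_choose_square_le_power[OF assms(1,2)] unfolding B_def
      by (metis of_nat_le_iff of_nat_mult of_nat_power)
    moreover have "real n * B\<^sup>2 > 0" using \<open>B \<ge> 1\<close> \<open>n > 0\<close> by simp
    ultimately have "t\<^sup>2 / (2 * real n ^ (2 * k - 1)) \<le> t\<^sup>2 / (2 * (real n * B\<^sup>2))"
      using \<open>n > 0\<close> by (intro divide_left_mono) (auto intro!: mult_pos_pos)
    then show ?thesis by simp
  qed
  finally show ?thesis .
qed

theorem mainTheorem12:
  fixes k :: nat
  assumes "k \<ge> 1"
  shows "\<exists>C::real. C > 0 \<and>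
    (\<forall>tau n (t::real). tau \<in> perms k \<longrightarrow> n \<ge> k \<longrightarrow> t \<ge> real ((n - 1) choose (k - 1)) \<longrightarrow>
       dev_prob k tau n t \<le> 2 * exp (- (t ^ 2) / (C * real n ^ (2 * k - 1))))"
  using dev_prob_le[OF assms] by (intro exI[of _ 2]) auto

end
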